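(* Let $D$ be a Euclidean domain with fraction field $K$. Then $D$ is Bonaccian. More precisely, if $f$ is any Euclidean function on $D$ and $a,b \in D$ are nonzero with $f(a) \leq f(b)$, then $a/b$ is $D$-Egyptian.
   Context: A Euclidean function on an integral domain $D$ is a function $f: D\setminus\{0\} \to \mathbb{Z}$ such that for all nonzero $a,b \in D$: (1) $f(ab) \geq f(a)$, and (2) there exist $q,r \in D$ with $b = aq + r$ and either $r=0$ or $f(r) < f(a)$. A Euclidean domain is an integral domain admitting a Euclidean function. An element of $K$ is $D$-Egyptian if it is a sum of reciprocals of distinct nonzero elements of $D$. $D$ is Bonaccian if for every nonzero $\alpha \in K$, either $\alpha$ or $\alpha^{-1}$ is $D$-Egyptian. *)

theory Defs
  imports "HOL-Computational_Algebra.Fraction_Field"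
begin

text \<open>The integral domain D is the type 'a::idom; its fraction field K is 'a fract.
  Elements of D embed into K as Fract d 1.\<close>

definition euclidean_function :: "('a::idom \<Rightarrow> int) \<Rightarrow> bool" where
  "euclidean_function f \<longleftrightarrow>
     (\<forall>a b. a \<noteq> 0 \<longrightarrow> b \<noteq> 0 \<longrightarrow>
        f (a * b) \<ge> f a \<and>
        (\<exists>q r. b = a * q + r \<and> (r = 0 \<or> f r < f a)))"

definition euclidean_domain :: "'a::idom itself \<Rightarrow> bool" where
  "euclidean_domain (_ :: 'a itself) \<longleftrightarrow> (\<exists>f :: 'a \<Rightarrow> int. euclidean_function f)"

definition egyptian :: "'a::idom fract \<Rightarrow> bool" where
  "egyptian \<alpha> \<longleftrightarrow>
     (\<exists>S :: 'a set. finite S \<and> 0 \<notin> S \<and> \<alpha> = (\<Sum>d\<in>S. inverse (Fract d 1)))"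

definition bonaccian :: "'a::idom itself \<Rightarrow> bool" where
  "bonaccian (_ :: 'a itself) \<longleftrightarrow>
     (\<forall>\<alpha> :: 'a fract. \<alpha> \<noteq> 0 \<longrightarrow> egyptian \<alpha> \<or> egyptian (inverse \<alpha>))"

end

theory Submission
  imports Defs "HOL-Number_Theory.Cong"
begin

text \<open>For \<open>f a \<le> f b\<close>, divide \<open>b = a q + r\<close>: then \<open>a / b = 1 / q + (-r) / (b q)\<close>
  with \<open>f (-r) = f r < f a \<le> f (b q)\<close>, so induction on \<open>f a\<close> (the Euclidean algorithm)
  writes \<open>a / b\<close> as a sum of unit fractions, possibly with repetitions. A repeated pair
  \<open>1 / x + 1 / x\<close> is removed according to the characteristic of the domain: if it is even
  and positive then \<open>2 = 0\<close> and the pair vanishes; if it is odd then \<open>2\<close> is a unit and the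
  pair is \<open>1 / (x / 2)\<close>; if it is \<open>0\<close> then \<open>1 / x = \<Sum>n\<in>S. 1 / (n x)\<close> for a set \<open>S\<close> of
  naturals whose reciprocals sum to \<open>1\<close> and which avoids the finitely many \<open>n\<close> with \<open>n x\<close>
  already in use. Such \<open>S\<close> with arbitrarily large elements exist: a segment of the harmonic
  series followed by the greedy algorithm.\<close>

lemma sum_unit_fractions_eq_nat_fraction:
  fixes K :: "nat set"
  assumes "finite K"
  shows "\<exists>p q. 0 < q \<and> (\<Sum>k\<in>K. 1 / of_nat k) = (of_nat p / of_nat q :: 'b :: field_char_0)"
  using assms
proof (induction K rule: finite_induct)
  case empty
  show ?case by (intro exI[of _ 0] exI[of _ 1]) simp
next
  case (insert k K)
  then obtain p q where pq: "0 < q" "(\<Sum>k\<in>K. 1 / of_nat k) = (of_nat p / of_nat q :: 'b)"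
    by blast
  show ?case
  proof (cases "k = 0")
    case True
    then show ?thesis using insert pq by auto
  next
    case False
    then have "(\<Sum>k\<in>insert k K. 1 / of_nat k) = (of_nat (p * k + q) / of_nat (q * k) :: 'b)"
      using insert pq by (simp add: field_simps)
    then show ?thesis using pq False by (intro exI[of _ "p * k + q"] exI[of _ "q * k"]) simp
  qed
qed

lemma unit_fraction_add_remainder:
  fixes p q n :: nat
  assumes "q \<le> n * p" "0 < q" "0 < n"
  shows "1 / of_nat n + of_nat (n * p - q) / of_nat (q * n) = (of_nat p / of_nat q :: 'b :: field_char_0)"
proof -
  have "1 / of_nat n + of_nat (n * p - q) / of_nat (q * n)
      = (of_nat q + of_nat (n * p - q)) / (of_nat q * (of_nat n :: 'b))"
    using assms by (simp add: field_simps)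
  also have "of_nat q + of_nat (n * p - q) = (of_nat n * of_nat p :: 'b)"
    using assms(1) by (simp flip: of_nat_add of_nat_mult)
  finally show ?thesis using assms(3) by simp
qed

text \<open>The Fibonacci--Sylvester greedy algorithm: subtract the largest unit fraction
  that fits; the numerator strictly decreases.\<close>
lemma greedy_unit_fraction_expansion:
  fixes p q N :: nat
  assumes "0 < N" "p * N < q"
  shows "\<exists>S. finite S \<and> S \<subseteq> {N<..} \<and>
    (\<Sum>n\<in>S. 1 / of_nat n) = (of_nat p / of_nat q :: 'b :: field_char_0)"
  using assms
proof (induction p arbitrary: q N rule: less_induct)
  case (less p)
  show ?case
  proof (cases "p = 0")
    case True
    then show ?thesis by (intro exI[of _ "{}"]) simp
  next
    case False
    define n where "n = (LEAST n. q \<le> n * p)"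
    have q_le: "q \<le> n * p"
      unfolding n_def by (rule LeastI[of _ q]) (use False in simp)
    have N_less: "N < n"
    proof (rule ccontr)
      assume "\<not> N < n"
      then have "n * p \<le> p * N" by (simp add: mult.commute)
      with q_le less.prems(2) show False by linarith
    qed
    have "\<not> q \<le> (n - 1) * p"
      unfolding n_def by (rule not_less_Least) (use N_less n_def in simp)
    moreover have "n * p = (n - 1) * p + p" using N_less by (cases n) auto
    ultimately have p'_less: "n * p - q < p" using q_le by linarith
    have "p \<le> p * N" using less.prems(1) by simp
    with less.prems(2) have "p < q" by linarith
    then have "(n * p - q) * n < q * n" using p'_less N_less by simp
    then obtain S where S: "finite S" "S \<subseteq> {n<..}"
        "(\<Sum>m\<in>S. 1 / of_nat m) = (of_nat (n * p - q) / of_nat (q * n) :: 'b)"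
      using less.IH[OF p'_less, of n "q * n"] N_less by auto
    have "n \<notin> S" using S(2) by auto
    then have "(\<Sum>m\<in>insert n S. 1 / of_nat m) = (of_nat p / of_nat q :: 'b)"
      using S unit_fraction_add_remainder[OF q_le] N_less \<open>p < q\<close> by simp
    then show ?thesis using S N_less by (intro exI[of _ "insert n S"]) auto
  qed
qed

lemma sum_unit_fractions_dyadic_block_ge:
  assumes "0 < m"
  shows "1 / 2 \<le> (\<Sum>k\<in>{m..<2*m}. 1 / (of_nat k :: 'b :: linordered_field))"
proof -
  have "of_nat (card {m..<2*m}) * (1 / of_nat (2*m)) \<le> (\<Sum>k\<in>{m..<2*m}. 1 / (of_nat k :: 'b))"
  proof (rule sum_bounded_below)
    fix k assume "k \<in> {m..<2*m}"
    then have "0 < (of_nat k :: 'b)" "(of_nat k :: 'b) \<le> of_nat (2*m)"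
      using assms by (simp_all only: of_nat_0_less_iff of_nat_le_iff) auto
    then show "1 / of_nat (2*m) \<le> 1 / (of_nat k :: 'b)" by (simp add: frac_le)
  qed
  then show ?thesis using assms by simp
qed

lemma sum_unit_fractions_ge_one:
  assumes "0 < m"
  shows "1 \<le> (\<Sum>k\<in>{m..<4*m}. 1 / (of_nat k :: 'b :: linordered_field))"
proof -
  have "(\<Sum>k\<in>{m..<4*m}. 1 / (of_nat k :: 'b))
      = (\<Sum>k\<in>{m..<2*m}. 1 / of_nat k) + (\<Sum>k\<in>{2*m..<2*(2*m)}. 1 / of_nat k)"
    by (subst sum.atLeastLessThan_concat) auto
  then show ?thesis
    using sum_unit_fractions_dyadic_block_ge[of m, where 'b = 'b]
      sum_unit_fractions_dyadic_block_ge[of "2*m", where 'b = 'b] assms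
    by simp
qed

lemma harmonic_segment_crossing_one:
  assumes "2 \<le> M"
  obtains N where "M < N" "(\<Sum>k\<in>{M..<N}. 1 / of_nat k) < (1 :: 'b :: linordered_field)"
    "1 \<le> (\<Sum>k\<in>{M..<N}. 1 / of_nat k) + 1 / (of_nat N :: 'b)"
proof -
  define H where "H N = (\<Sum>k\<in>{M..<N}. 1 / (of_nat k :: 'b))" for N
  have "1 \<le> H (4 * M)" unfolding H_def using sum_unit_fractions_ge_one[of M] assms by simp
  moreover have "H (4 * M) \<le> H (Suc (4 * M))" unfolding H_def by simp
  ultimately have ex: "1 \<le> H (Suc (4 * M))" by linarith
  define N where "N = (LEAST n. 1 \<le> H (Suc n))"
  have H_Suc: "1 \<le> H (Suc N)"
    unfolding N_def by (rule LeastI[of _ "4 * M"]) (rule ex)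
  have M_less: "M < N"
  proof (rule ccontr)
    assume "\<not> M < N"
    then have "H (Suc N) \<le> 1 / of_nat M"
      unfolding H_def by (cases "N = M") (auto simp: atLeastLessThan_empty)
    moreover have "1 / of_nat M < (1 :: 'b)" using assms by simp
    ultimately show False using H_Suc by linarith
  qed
  have "H N < 1"
  proof -
    obtain k where "N = Suc k" using M_less by (cases N) auto
    then show ?thesis
      using not_less_Least[of k "\<lambda>n. 1 \<le> H (Suc n)"] N_def by fastforce
  qed
  moreover have "1 \<le> H N + 1 / of_nat N"
    using H_Suc M_less unfolding H_def by simp
  ultimately show thesis using that M_less unfolding H_def by blast
qed

text \<open>The remainder left by the harmonic segment is at most \<open>1 / N\<close>, so the greedy
  algorithm expands it with denominators \<open>\<ge> N\<close>.\<close>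
lemma unit_fractions_sum_one_above:
  assumes "2 \<le> M"
  shows "\<exists>S. finite S \<and> S \<subseteq> {M..} \<and> (\<Sum>n\<in>S. 1 / of_nat n) = (1 :: 'b :: linordered_field)"
proof -
  obtain N where "M < N" and H_less: "(\<Sum>k\<in>{M..<N}. 1 / of_nat k) < (1 :: 'b)"
    and H_ge: "1 \<le> (\<Sum>k\<in>{M..<N}. 1 / of_nat k) + 1 / (of_nat N :: 'b)"
    using harmonic_segment_crossing_one[OF assms, where 'b = 'b] by blast
  define H where "H = (\<Sum>k\<in>{M..<N}. 1 / (of_nat k :: 'b))"
  obtain a q where aq: "0 < q" "H = of_nat a / of_nat q"
    unfolding H_def using sum_unit_fractions_eq_nat_fraction by blast
  then have "a < q" using H_less by (simp add: H_def)
  define p where "p = q - a"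
  have pq: "1 - H = of_nat p / of_nat q"
    using aq \<open>a < q\<close> by (simp add: p_def of_nat_diff field_simps)
  then have "of_nat p / of_nat q \<le> 1 / (of_nat N :: 'b)"
    using H_ge by (simp add: H_def)
  then have "of_nat (p * N) \<le> (of_nat q :: 'b)"
    using aq(1) \<open>M < N\<close> by (simp add: field_simps)
  then have "p * N \<le> q" by (simp only: of_nat_le_iff)
  then have "p * (N - 1) < q"
    using aq(1) by (cases "p = 0") (auto simp: diff_mult_distrib2 intro: le_less_trans[rotated])
  then obtain S where S: "finite S" "S \<subseteq> {N - 1<..}"
      "(\<Sum>n\<in>S. 1 / of_nat n) = (of_nat p / of_nat q :: 'b)"
    using greedy_unit_fraction_expansion[of "N - 1" p q] \<open>M < N\<close> assms by auto
  have S_ge: "S \<subseteq> {N..}" using S(2) by auto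
  then have disj: "{M..<N} \<inter> S = {}" by auto
  have "(\<Sum>n\<in>{M..<N} \<union> S. 1 / of_nat n) = H + (\<Sum>n\<in>S. 1 / of_nat n)"
    unfolding H_def using sum.union_disjoint[OF _ S(1) disj] by simp
  also have "\<dots> = 1" using S(3) pq by simp
  finally show ?thesis
    using S(1) S_ge \<open>M < N\<close> by (intro exI[of _ "{M..<N} \<union> S"]) auto
qed

lemma sum_inverse_of_nat_common_denominator:
  fixes S :: "nat set"
  assumes "finite S" and nonzero: "\<And>n. n \<in> S \<Longrightarrow> of_nat n \<noteq> (0 :: 'b :: field)"
  shows "(\<Sum>n\<in>S. inverse (of_nat n :: 'b)) = of_nat (\<Sum>n\<in>S. \<Prod>S div n) / of_nat (\<Prod>S)"
proof -
  have P: "of_nat (\<Prod>S) \<noteq> (0 :: 'b)"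
    using assms by (simp add: of_nat_prod prod_zero_iff)
  have "inverse (of_nat n :: 'b) = of_nat (\<Prod>S div n) / of_nat (\<Prod>S)" if "n \<in> S" for n
  proof -
    have "\<Prod>S div n * n = \<Prod>S" using dvd_prodI[OF assms(1) that, of "\<lambda>n. n"] by simp
    then have "of_nat (\<Prod>S div n) * of_nat n = (of_nat (\<Prod>S) :: 'b)" by (metis of_nat_mult)
    then show ?thesis using nonzero[OF that] P by (simp add: field_simps)
  qed
  then show ?thesis by (simp add: sum_divide_distrib)
qed

lemma sum_inverse_of_nat_eq_one_transfer:
  fixes S :: "nat set"
  assumes "finite S" "(\<Sum>n\<in>S. 1 / of_nat n) = (1 :: 'b :: field_char_0)"
    and nonzero: "\<And>n. n \<in> S \<Longrightarrow> of_nat n \<noteq> (0 :: 'c :: field)"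
  shows "(\<Sum>n\<in>S. inverse (of_nat n :: 'c)) = 1"
proof -
  have "\<And>n. n \<in> S \<Longrightarrow> of_nat n \<noteq> (0 :: 'b)"
    using nonzero by fastforce
  then have "of_nat (\<Sum>n\<in>S. \<Prod>S div n) / of_nat (\<Prod>S) = (1 :: 'b)"
    using sum_inverse_of_nat_common_denominator[OF assms(1), where 'b = 'b] assms(2)
    by (simp add: inverse_eq_divide)
  then have "(\<Sum>n\<in>S. \<Prod>S div n) = \<Prod>S"
    by (metis divide_eq_1_iff of_nat_eq_iff)
  moreover have "of_nat (\<Prod>S) \<noteq> (0 :: 'c)"
    using nonzero assms(1) by (simp add: of_nat_prod prod_zero_iff)
  ultimately show ?thesis
    using sum_inverse_of_nat_common_denominator[OF assms(1) nonzero] by simp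
qed

abbreviation recip_sum :: "'a :: idom set \<Rightarrow> 'a fract" where
  "recip_sum S \<equiv> \<Sum>d\<in>S. inverse (Fract d 1)"

lemma egyptianI: "finite S \<Longrightarrow> 0 \<notin> S \<Longrightarrow> \<alpha> = recip_sum S \<Longrightarrow> egyptian \<alpha>"
  unfolding egyptian_def by blast

lemma egyptian_0 [simp]: "egyptian 0"
  by (rule egyptianI[of "{}"]) auto

lemma Fract_two: "(2 :: 'a :: idom fract) = Fract 2 1"
  using of_nat_fract[of 2, where 'a = 'a] by simp

lemma two_eq_0_or_two_dvd_1_or_CHAR_0:
  "(2 :: 'a :: idom) = 0 \<or> (2 :: 'a) dvd 1 \<or> CHAR('a) = 0"
proof (cases "even CHAR('a)")
  case True
  then obtain k where k: "CHAR('a) = 2 * k" by blast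
  show ?thesis
  proof (cases "k = 0")
    case False
    then have "\<not> CHAR('a) dvd k" using k by (auto dest: dvd_imp_le)
    then have "of_nat k \<noteq> (0 :: 'a)" by (simp add: of_nat_eq_0_iff_char_dvd)
    moreover have "2 * of_nat k = (0 :: 'a)" using of_nat_CHAR[where 'a = 'a] k by simp
    ultimately show ?thesis by simp
  qed (use k in simp)
next
  case False
  then obtain k where "CHAR('a) = 2 * k + 1" using oddE by blast
  then have "2 * of_nat (k + 1) = (1 :: 'a)"
    using of_nat_CHAR[where 'a = 'a] by (simp add: algebra_simps)
  then show ?thesis by (metis dvdI)
qed

lemma two_mult_inverse_Fract:
  assumes "2 * u = (1 :: 'a :: idom)"
  shows "2 * inverse (Fract x 1) = inverse (Fract (x * u) 1)"
proof (cases "x = 0")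
  case False
  have "u \<noteq> 0" using assms by auto
  with False assms show ?thesis by (simp add: Fract_two eq_fract algebra_simps)
qed (simp add: fract_collapse)

lemma inverse_Fract_split_avoiding:
  fixes x :: "'a :: idom" and F :: "'a set"
  assumes "CHAR('a) = 0" "finite F" "x \<noteq> 0"
  shows "\<exists>T. finite T \<and> 0 \<notin> T \<and> F \<inter> T = {} \<and> recip_sum T = inverse (Fract x 1)"
proof -
  define h where "h n = of_nat n * x" for n
  have "inj h"
    using assms(1,3) by (auto intro!: injI simp: h_def of_nat_eq_iff_cong_CHAR)
  then have "finite (h -` F)" using assms(2) by (rule finite_vimageI[rotated])
  then obtain k where k: "h -` F \<subseteq> {..<k}" by (auto simp: finite_nat_set_iff_bounded)
  \<comment> \<open>\<open>int fract\<close> stands in for \<open>\<rat>\<close>: importing \<open>Rat\<close> would make \<open>Fract\<close> ambiguous.\<close>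
  obtain S where S: "finite S" "S \<subseteq> {max 2 k..}" "(\<Sum>n\<in>S. 1 / of_nat n) = (1 :: int fract)"
    using unit_fractions_sum_one_above[of "max 2 k"] by auto
  have of_nat_nonzero: "of_nat n \<noteq> (0 :: 'a)" if "n \<in> S" for n
    using that S(2) assms(1) by (auto simp: CHAR_eq0_iff)
  then have "of_nat n \<noteq> (0 :: 'a fract)" if "n \<in> S" for n
    using that by (simp add: of_nat_fract Zero_fract_def eq_fract)
  then have sum_one: "(\<Sum>n\<in>S. inverse (of_nat n :: 'a fract)) = 1"
    by (rule sum_inverse_of_nat_eq_one_transfer[OF S(1,3)])
  have "recip_sum (h ` S) = (\<Sum>n\<in>S. inverse (Fract (h n) 1))"
    using \<open>inj h\<close> by (simp add: sum.reindex inj_on_def inj_def)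
  also have "\<dots> = (\<Sum>n\<in>S. inverse (of_nat n) * inverse (Fract x 1))"
    by (simp add: h_def of_nat_fract)
  also have "\<dots> = inverse (Fract x 1)"
    using sum_one by (simp flip: sum_distrib_right)
  finally have "recip_sum (h ` S) = inverse (Fract x 1)" .
  moreover have "0 \<notin> h ` S" "F \<inter> h ` S = {}"
    using of_nat_nonzero assms(3) k S(2) by (fastforce simp: h_def)+
  ultimately show ?thesis using S(1) by (intro exI[of _ "h ` S"]) auto
qed

lemma egyptian_recip_sum_add_inverse:
  assumes "finite E" "0 \<notin> E" "x \<noteq> 0"
  shows "egyptian (recip_sum E + inverse (Fract x 1))"
  using assms
proof (induction "card E" arbitrary: E x rule: less_induct)
  case less
  show ?case
  proof (cases "x \<in> E")
    case False
    then show ?thesis using less.prems by (intro egyptianI[of "insert x E"]) (auto simp: add.commute)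
  next
    case True
    define E' where "E' = E - {x}"
    have E': "finite E'" "0 \<notin> E'" "card E' < card E"
      using less.prems card_Diff1_less[OF less.prems(1) True] by (auto simp: E'_def)
    have sum_eq: "recip_sum E + inverse (Fract x 1) = recip_sum E' + 2 * inverse (Fract x 1)"
      using True less.prems(1) by (simp add: E'_def sum.remove)
    consider "(2 :: 'a) = 0" | "(2 :: 'a) dvd 1" | "CHAR('a) = 0"
      using two_eq_0_or_two_dvd_1_or_CHAR_0[where 'a = 'a] by argo
    then show ?thesis
    proof cases
      case 1
      then have "(2 :: 'a fract) = 0" by (simp add: Fract_two fract_collapse)
      then show ?thesis using sum_eq E' by (intro egyptianI[of E']) auto
    next
      case 2
      then obtain u where u: "2 * u = (1 :: 'a)" by (metis dvdE)
      then have "x * u \<noteq> 0" using less.prems(3) by auto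
      then have "egyptian (recip_sum E' + inverse (Fract (x * u) 1))"
        using less.hyps E' by blast
      then show ?thesis using sum_eq two_mult_inverse_Fract[OF u] by (simp only:)
    next
      case 3
      obtain T where T: "finite T" "0 \<notin> T" "E \<inter> T = {}" "recip_sum T = inverse (Fract x 1)"
        using inverse_Fract_split_avoiding[OF 3 less.prems(1,3)] by blast
      then have "recip_sum E + inverse (Fract x 1) = recip_sum (E \<union> T)"
        using less.prems(1) by (simp add: sum.union_disjoint)
      then show ?thesis using T less.prems by (intro egyptianI[of "E \<union> T"]) auto
    qed
  qed
qed

lemma egyptian_add_inverse:
  assumes "egyptian \<alpha>" "x \<noteq> 0"
  shows "egyptian (\<alpha> + inverse (Fract x 1))"
proof -
  obtain E where "finite E" "0 \<notin> E" "\<alpha> = recip_sum E"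
    using assms(1) unfolding egyptian_def by blast
  then show ?thesis using egyptian_recip_sum_add_inverse assms(2) by simp
qed

lemma euclidean_function_mult_ge:
  "euclidean_function f \<Longrightarrow> a \<noteq> 0 \<Longrightarrow> b \<noteq> 0 \<Longrightarrow> f a \<le> f (a * b)"
  unfolding euclidean_function_def by blast

lemma euclidean_function_division:
  "euclidean_function f \<Longrightarrow> a \<noteq> 0 \<Longrightarrow> b \<noteq> 0 \<Longrightarrow> \<exists>q r. b = a * q + r \<and> (r = 0 \<or> f r < f a)"
  unfolding euclidean_function_def by blast

lemma euclidean_function_one_le:
  "euclidean_function f \<Longrightarrow> (x :: 'a :: idom) \<noteq> 0 \<Longrightarrow> f 1 \<le> f x"
  using euclidean_function_mult_ge[of f 1 x] by simp

lemma euclidean_function_uminus: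
  "euclidean_function f \<Longrightarrow> (x :: 'a :: idom) \<noteq> 0 \<Longrightarrow> f (- x) = f x"
  using euclidean_function_mult_ge[of f x "-1"] euclidean_function_mult_ge[of f "-x" "-1"] by simp

lemma egyptian_Fract_if_euclidean_function_le:
  fixes f :: "'a :: idom \<Rightarrow> int"
  assumes f: "euclidean_function f"
  shows "a \<noteq> 0 \<Longrightarrow> b \<noteq> 0 \<Longrightarrow> f a \<le> f b \<Longrightarrow> egyptian (Fract a b)"
proof (induction "nat (f a - f 1)" arbitrary: a b rule: less_induct)
  case less
  obtain q r where qr: "b = a * q + r" "r = 0 \<or> f r < f a"
    using euclidean_function_division[OF f less.prems(1,2)] by blast
  have "q \<noteq> 0" using qr less.prems by auto
  have "Fract (- r) (b * q) + inverse (Fract q 1) = Fract ((b - r) * q) (b * q * q)"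
    using \<open>q \<noteq> 0\<close> less.prems(2) by (simp add: algebra_simps)
  also have "\<dots> = Fract a b"
  proof -
    have "(b - r) * q * b = a * (b * q * q)" by (simp add: qr(1) algebra_simps)
    then show ?thesis using \<open>q \<noteq> 0\<close> less.prems(2) by (simp add: eq_fract)
  qed
  finally have split: "Fract a b = Fract (- r) (b * q) + inverse (Fract q 1)" ..
  have "egyptian (Fract (- r) (b * q))"
  proof (cases "r = 0")
    case True
    then show ?thesis by (simp add: fract_collapse)
  next
    case False
    have "f (- r) < f a" using qr(2) False euclidean_function_uminus[OF f] by simp
    moreover have "f a \<le> f (b * q)"
      using euclidean_function_mult_ge[OF f less.prems(2) \<open>q \<noteq> 0\<close>] less.prems(3) by simp
    moreover have "f 1 \<le> f (- r)" using euclidean_function_one_le[OF f] False by simp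
    ultimately show ?thesis
      using less.hyps[of "- r" "b * q"] False \<open>q \<noteq> 0\<close> less.prems(2) by simp
  qed
  then show ?case using split egyptian_add_inverse \<open>q \<noteq> 0\<close> by simp
qed

lemma bonaccian_if_euclidean_function:
  assumes f: "euclidean_function (f :: 'a :: idom \<Rightarrow> int)"
  shows "bonaccian TYPE('a)"
  unfolding bonaccian_def
proof (intro allI impI)
  fix \<alpha> :: "'a fract"
  assume "\<alpha> \<noteq> 0"
  then obtain a b where ab: "\<alpha> = Fract a b" "a \<noteq> 0" "b \<noteq> 0"
    by (cases \<alpha> rule: Fract_cases_nonzero) auto
  have "f a \<le> f b \<or> f b \<le> f a" by linarith
  then show "egyptian \<alpha> \<or> egyptian (inverse \<alpha>)"
    using egyptian_Fract_if_euclidean_function_le[OF f] ab by auto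
qed

theorem theorem2p7:
  assumes "euclidean_domain TYPE('a::idom)"
  shows "bonaccian TYPE('a) \<and>
    (\<forall>f :: 'a \<Rightarrow> int. euclidean_function f \<longrightarrow>
       (\<forall>a b. a \<noteq> 0 \<longrightarrow> b \<noteq> 0 \<longrightarrow> f a \<le> f b \<longrightarrow> egyptian (Fract a b)))"
proof -
  obtain f :: "'a \<Rightarrow> int" where "euclidean_function f"
    using assms unfolding euclidean_domain_def by blast
  then show ?thesis
    using bonaccian_if_euclidean_function egyptian_Fract_if_euclidean_function_le by blast
qed

end
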